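(* Let $R$ be a subring of the field $\bar{\mathbb{Q}}$ of algebraic numbers, let $S\subset\mathbb{N}$ be a $\Leftrightarrow_R$-connected subset, and let $T\subset S$. Suppose that for some $n\in S$ there are infinitely many elements $m\in T$ with $m\Leftrightarrow_R n$. Then the homomorphism $\tau^R_{S,T}\colon R[q]^S\to P_T(R)$ is injective. In particular, if $R$ is a subring of the ring of algebraic integers, then for any subset $T\subset\mathbb{N}$ containing infinitely many prime powers, $\tau^R_{\mathbb{N},T}\colon R[q]^{\mathbb{N}}\to P_T(R)$ is injective.
   Context: All rings are commutative with unit; $q$ is an indeterminate. For $n\in\mathbb{N}$, $\Phi_n(q)$ is the $n$th cyclotomic polynomial. For $S\subset\mathbb{N}$, $\Phi_S^*$ is the multiplicative subset of $\mathbb{Z}[q]$ generated by $\{\Phi_m(q):m\in S\}$, directed by divisibility, and $R[q]^S=\varprojlim_{f\in\Phi_S^*}R[q]/(f)$. For $T\subset S$, $P_T(R)=\prod_{m\in T}R[q]/(\Phi_m(q))$ and $\tau^R_{S,T}\colon R[q]^S\to P_T(R)$ is the homomorphism induced by $f(q)\mapsto (f(q)\bmod \Phi_m(q))_{m\in T}$. A ring $R$ is $p$-adically separated if $\bigcap_{j\ge0}p^jR=(0)$. For $m,m'\in\mathbb{N}$ write $m\Leftrightarrow_R m'$ if $m=m'$, or $m/m'$ is an integer power (positive or negative exponent) of a prime $p$ with $R$ $p$-adically separated, or $R=\{0\}$. A subset $S\subset\mathbb{N}$ is $\Leftrightarrow_R$-connected if it is nonempty and any two elements are joined by a finite chain in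 $S$ with consecutive elements related by $\Leftrightarrow_R$. *)

theory Defs
  imports "HOL-Analysis.Analysis" "HOL-Computational_Algebra.Computational_Algebra"
begin

text \<open>The n-th cyclotomic polynomial, viewed inside complex polynomials (it has integer
  coefficients).  Only used for n \<ge> 1.\<close>
definition cyclotomic_poly :: "nat \<Rightarrow> complex poly" where
  "cyclotomic_poly n =
     (\<Prod>k\<in>{k\<in>{1..n}. coprime k n}. [:- cis (2 * pi * real k / real n), 1:])"

definition coeffs_in :: "complex set \<Rightarrow> complex poly \<Rightarrow> bool" where
  "coeffs_in A p \<longleftrightarrow> (\<forall>i. coeff p i \<in> A)"

definition dvd_in :: "complex set \<Rightarrow> complex poly \<Rightarrow> complex poly \<Rightarrow> bool" where
  "dvd_in A f g \<longleftrightarrow> (\<exists>h. coeffs_in A h \<and> g = f * h)"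

definition subring_C :: "complex set \<Rightarrow> bool" where
  "subring_C R \<longleftrightarrow> 0 \<in> R \<and> 1 \<in> R \<and> (\<forall>x\<in>R. \<forall>y\<in>R. x + y \<in> R \<and> x * y \<in> R \<and> - x \<in> R)"

text \<open>The multiplicative subset \<Phi>_S^* generated by the \<Phi>_m, m \<in> S: all finite products
  (with repetition) of such cyclotomic polynomials, including the empty product 1.\<close>
definition Phi_star :: "nat set \<Rightarrow> complex poly set" where
  "Phi_star S = {prod_mset (image_mset cyclotomic_poly M) | M. set_mset M \<subseteq> S}"

text \<open>Elements of R[q]^S = lim_{f \<in> \<Phi>_S^*} R[q]/(f), represented by families x with
  x f \<in> R[q] a representative of the component in R[q]/(f); compatibility along the
  divisibility order (divisibility in Z[q]) of the index set.\<close>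
definition completion_elem :: "complex set \<Rightarrow> nat set \<Rightarrow> (complex poly \<Rightarrow> complex poly) \<Rightarrow> bool" where
  "completion_elem R S x \<longleftrightarrow>
     (\<forall>f\<in>Phi_star S. coeffs_in R (x f)) \<and>
     (\<forall>f\<in>Phi_star S. \<forall>f'\<in>Phi_star S. dvd_in \<int> f f' \<longrightarrow> dvd_in R f (x f' - x f))"

definition completion_eq :: "complex set \<Rightarrow> nat set \<Rightarrow> (complex poly \<Rightarrow> complex poly) \<Rightarrow> (complex poly \<Rightarrow> complex poly) \<Rightarrow> bool" where
  "completion_eq R S x y \<longleftrightarrow> (\<forall>f\<in>Phi_star S. dvd_in R f (x f - y f))"

text \<open>Equality of the images under \<tau>^R_{S,T} in P_T(R) = \<Pi>_{m\<in>T} R[q]/(\<Phi>_m).\<close>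
definition tau_eq :: "complex set \<Rightarrow> nat set \<Rightarrow> (complex poly \<Rightarrow> complex poly) \<Rightarrow> (complex poly \<Rightarrow> complex poly) \<Rightarrow> bool" where
  "tau_eq R T x y \<longleftrightarrow> (\<forall>m\<in>T. dvd_in R (cyclotomic_poly m) (x (cyclotomic_poly m) - y (cyclotomic_poly m)))"

definition tau_injective :: "complex set \<Rightarrow> nat set \<Rightarrow> nat set \<Rightarrow> bool" where
  "tau_injective R S T \<longleftrightarrow>
     (\<forall>x y. completion_elem R S x \<longrightarrow> completion_elem R S y \<longrightarrow> tau_eq R T x y \<longrightarrow> completion_eq R S x y)"

definition p_adically_separated :: "complex set \<Rightarrow> nat \<Rightarrow> bool" where
  "p_adically_separated R p \<longleftrightarrow> (\<Inter>j. {of_nat p ^ j * r | r. r \<in> R}) = {0}"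

definition equiv_R :: "complex set \<Rightarrow> nat \<Rightarrow> nat \<Rightarrow> bool" where
  "equiv_R R m m' \<longleftrightarrow> m = m' \<or>
     (\<exists>p k. prime p \<and> p_adically_separated R p \<and> (m = m' * p ^ k \<or> m' = m * p ^ k)) \<or>
     R = {0}"

definition equiv_R_connected :: "complex set \<Rightarrow> nat set \<Rightarrow> bool" where
  "equiv_R_connected R S \<longleftrightarrow> S \<noteq> {} \<and>
     (\<forall>a\<in>S. \<forall>b\<in>S. (\<lambda>u v. u \<in> S \<and> v \<in> S \<and> equiv_R R u v)\<^sup>*\<^sup>* a b)"

end

theory Submission
  imports Defs "HOL-Computational_Algebra.Field_as_Ring"
begin

text \<open>
  Let \<open>z\<close> be the difference of two elements of \<open>R[q]\<^sup>S\<close> with the same image under \<open>\<tau>\<close>,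
  and say that \<open>z\<close> vanishes at \<open>s \<in> S\<close> if \<open>\<Phi> s ^ N\<close> divides the \<open>\<Phi> s ^ N\<close>-component
  of \<open>z\<close> for every \<open>N\<close>. The cyclotomic polynomials being pairwise coprime, \<open>z = 0\<close> as soon
  as it vanishes at every \<open>s \<in> S\<close>.

  Vanishing propagates along \<open>\<Leftrightarrow>\<^sub>R\<close>. From the Frobenius congruence
  \<open>\<Phi> n (q ^ p) \<equiv> \<Phi> n ^ p (mod p)\<close> and the factorisation of \<open>\<Phi> n (q ^ p)\<close> as
  \<open>\<Phi> (n * p)\<close> or \<open>\<Phi> n * \<Phi> (n * p)\<close> one gets \<open>\<Phi> (n * p ^ k) \<equiv> \<Phi> n ^ e (mod p)\<close> in
  \<open>\<int>[q]\<close> with \<open>e \<ge> max k (p - 1)\<close>. Hence if \<open>z\<close> vanishes at \<open>n\<close> and \<open>n'\<close> differs from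
  \<open>n\<close> by a power of \<open>p\<close>, a power of \<open>\<Phi> n\<close> lies in the ideal \<open>(\<Phi> n' ^ N, p ^ j)\<close>, so the
  \<open>\<Phi> n' ^ N\<close>-component of \<open>z\<close> is congruent modulo \<open>\<Phi> n' ^ N\<close> to \<open>p ^ j\<close> times an element
  of \<open>R[q]\<close>, for every \<open>j\<close>; it vanishes since \<open>R\<close> is \<open>p\<close>-adically separated.

  Vanishing at the given \<open>n\<close> comes from \<open>T\<close>. Either infinitely many \<open>m \<in> T\<close> are of the form
  \<open>n * p ^ k\<close> for a single prime \<open>p\<close>, and a product of \<open>j\<close> distinct such \<open>\<Phi> m\<close> lies in
  \<open>(\<Phi> n ^ N, p ^ j)\<close>; or they involve infinitely many primes \<open>p\<close>, each making the
  \<open>\<Phi> n ^ N\<close>-component divisible by \<open>p\<close>, and an algebraic number of \<open>R\<close> divisible by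
  infinitely many primes for which \<open>R\<close> is separated is zero. Over algebraic integers every prime
  is separated and every \<open>n \<ge> 1\<close> is connected to \<open>1\<close>, which gives the second statement.
\<close>

section \<open>Subrings of the complex numbers\<close>

locale subring_of_complex =
  fixes R :: "complex set"
  assumes subring: "subring_C R"
begin

lemma zero_mem [simp]: "0 \<in> R" and one_mem [simp]: "1 \<in> R"
  and add_mem: "x \<in> R \<Longrightarrow> y \<in> R \<Longrightarrow> x + y \<in> R"
  and mult_mem: "x \<in> R \<Longrightarrow> y \<in> R \<Longrightarrow> x * y \<in> R"
  and uminus_mem: "x \<in> R \<Longrightarrow> - x \<in> R"
  using subring unfolding subring_C_def by auto

lemma diff_mem: "x \<in> R \<Longrightarrow> y \<in> R \<Longrightarrow> x - y \<in> R"
  using add_mem[of x "- y"] uminus_mem[of y] by simp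

lemma sum_mem: "(\<And>i. i \<in> I \<Longrightarrow> f i \<in> R) \<Longrightarrow> sum f I \<in> R"
  by (induction I rule: infinite_finite_induct) (auto intro: add_mem)

lemma power_mem: "x \<in> R \<Longrightarrow> x ^ n \<in> R"
  by (induction n) (auto intro: mult_mem)

lemma of_nat_mem: "of_nat n \<in> R"
  by (induction n) (auto intro: add_mem)

lemma Ints_subset: "\<int> \<subseteq> R"
proof
  fix x :: complex assume "x \<in> \<int>"
  then obtain k where "x = of_int k" by (elim Ints_cases)
  then show "x \<in> R"
    using of_nat_mem[of "nat \<bar>k\<bar>"] uminus_mem[OF of_nat_mem[of "nat \<bar>k\<bar>"]] by (cases "k \<ge> 0") auto
qed

lemma coeffs_in_0 [simp]: "coeffs_in R 0" and coeffs_in_1 [simp]: "coeffs_in R 1"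
  unfolding coeffs_in_def by (auto simp: coeff_1)

lemma coeffs_in_pCons_iff: "coeffs_in R (pCons c p) \<longleftrightarrow> c \<in> R \<and> coeffs_in R p"
  unfolding coeffs_in_def by (auto simp: coeff_pCons split: nat.splits)

lemma coeffs_in_const: "c \<in> R \<Longrightarrow> coeffs_in R [:c:]"
  by (simp add: coeffs_in_pCons_iff)

lemma coeffs_in_monom: "c \<in> R \<Longrightarrow> coeffs_in R (monom c n)"
  unfolding coeffs_in_def by (auto simp: coeff_monom)

lemma coeffs_in_of_Ints: "coeffs_in \<int> p \<Longrightarrow> coeffs_in R p"
  using Ints_subset unfolding coeffs_in_def by blast

lemma coeffs_in_add: "coeffs_in R p \<Longrightarrow> coeffs_in R q \<Longrightarrow> coeffs_in R (p + q)"
  and coeffs_in_uminus: "coeffs_in R p \<Longrightarrow> coeffs_in R (- p)"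
  and coeffs_in_diff: "coeffs_in R p \<Longrightarrow> coeffs_in R q \<Longrightarrow> coeffs_in R (p - q)"
  and coeffs_in_smult: "c \<in> R \<Longrightarrow> coeffs_in R p \<Longrightarrow> coeffs_in R (smult c p)"
  unfolding coeffs_in_def by (auto intro: add_mem uminus_mem diff_mem mult_mem)

lemma coeffs_in_mult: "coeffs_in R p \<Longrightarrow> coeffs_in R q \<Longrightarrow> coeffs_in R (p * q)"
  unfolding coeffs_in_def coeff_mult by (auto intro!: sum_mem mult_mem)

lemma coeffs_in_power: "coeffs_in R p \<Longrightarrow> coeffs_in R (p ^ n)"
  by (induction n) (auto intro: coeffs_in_mult)

lemma coeffs_in_sum: "(\<And>i. i \<in> I \<Longrightarrow> coeffs_in R (f i)) \<Longrightarrow> coeffs_in R (sum f I)"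
  by (induction I rule: infinite_finite_induct) (auto intro: coeffs_in_add)

lemma coeffs_in_of_nat: "coeffs_in R (of_nat k)"
  by (simp add: of_nat_poly coeffs_in_const of_nat_mem)

lemma coeffs_in_prod: "(\<And>i. i \<in> I \<Longrightarrow> coeffs_in R (f i)) \<Longrightarrow> coeffs_in R (prod f I)"
  by (induction I rule: infinite_finite_induct) (auto intro: coeffs_in_mult)

lemma coeffs_in_pcompose: "coeffs_in R p \<Longrightarrow> coeffs_in R q \<Longrightarrow> coeffs_in R (p \<circ>\<^sub>p q)"
  by (induction p) (auto simp: pcompose_pCons coeffs_in_pCons_iff
      intro!: coeffs_in_add coeffs_in_const coeffs_in_mult)

lemma poly_mem: "coeffs_in R p \<Longrightarrow> x \<in> R \<Longrightarrow> poly p x \<in> R"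
  by (induction p) (auto simp: coeffs_in_pCons_iff intro!: add_mem mult_mem)

lemma coeffs_in_div_mod:
  assumes f: "lead_coeff f = 1" "coeffs_in R f" and g: "coeffs_in R g"
  shows "coeffs_in R (g div f) \<and> coeffs_in R (g mod f)"
  using g
proof (induction "length (coeffs g)" arbitrary: g rule: less_induct)
  case less
  have f0: "f \<noteq> 0" using f by auto
  show ?case
  proof (cases "g = 0 \<or> degree g < degree f")
    case True
    then show ?thesis using less.prems by (auto simp: div_poly_less mod_poly_less)
  next
    case False
    define c where "c = lead_coeff g"
    define d where "d = degree g - degree f"
    define g' where "g' = g - monom c d * f"
    have cR: "c \<in> R" using less.prems unfolding c_def coeffs_in_def by auto
    have g'R: "coeffs_in R g'"
      unfolding g'_def by (intro coeffs_in_diff coeffs_in_mult coeffs_in_monom less.prems cR f)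
    have "degree (monom c d * f) \<le> degree g"
      using False degree_mult_le[of "monom c d" f] degree_monom_le[of c d] unfolding d_def by linarith
    moreover have "coeff (monom c d * f) (degree g) = c"
      using False f by (simp add: coeff_monom_mult d_def)
    ultimately have "g' = 0 \<or> degree g' < degree g"
      unfolding g'_def c_def
      by (metis coeff_diff degree_diff_le diff_self le_neq_implies_less leading_coeff_0_iff order.refl)
    then have "length (coeffs g') < length (coeffs g)"
      using False by (cases "g' = 0") (auto simp: length_coeffs_degree)
    then have IH: "coeffs_in R (g' div f) \<and> coeffs_in R (g' mod f)"
      using less.hyps g'R by blast
    have g: "g = g' + monom c d * f" unfolding g'_def by simp
    have "g div f = monom c d + g' div f" "g mod f = g' mod f"
      unfolding g using f0 by simp_all
    then show ?thesis using IH cR by (simp add: coeffs_in_add coeffs_in_monom)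
  qed
qed

lemma dvd_in_iff_dvd:
  assumes "lead_coeff f = 1" "coeffs_in R f" "coeffs_in R g"
  shows "dvd_in R f g \<longleftrightarrow> f dvd g"
  using coeffs_in_div_mod[OF assms] unfolding dvd_in_def by (metis dvd_def dvd_mult_div_cancel)

end

interpretation Ints: subring_of_complex \<int>
  by unfold_locales (auto simp: subring_C_def)

section \<open>Primitive roots of unity and cyclotomic polynomials\<close>

lemma dvd_mult_iff_div_gcd_dvd:
  fixes m k d :: nat
  assumes "m > 0"
  shows "m dvd k * d \<longleftrightarrow> m div gcd m k dvd d"
proof -
  define g where "g = gcd m k"
  have g: "g > 0" using assms unfolding g_def by simp
  obtain m' k' where mk: "m = g * m'" "k = g * k'" unfolding g_def by (meson dvd_def gcd_dvd1 gcd_dvd2)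
  have m': "m div g = m'" and "k div g = k'" using mk g by simp_all
  then have "coprime m' k'"
    using div_gcd_coprime[of m k] assms unfolding g_def by simp
  have "m dvd k * d \<longleftrightarrow> m' dvd k' * d" using mk g by (simp add: mult.assoc)
  also have "\<dots> \<longleftrightarrow> m' dvd d" using \<open>coprime m' k'\<close> by (simp add: coprime_dvd_mult_right_iff)
  finally show ?thesis using m' unfolding g_def by simp
qed

definition primitive_roots :: "nat \<Rightarrow> complex set" where
  "primitive_roots n = {z. z ^ n = 1 \<and> (\<forall>d. z ^ d = 1 \<longrightarrow> n dvd d)}"

lemma primitive_roots_iff: "z \<in> primitive_roots n \<longleftrightarrow> (\<forall>d. z ^ d = 1 \<longleftrightarrow> n dvd d)"
  unfolding primitive_roots_def by (auto elim!: dvdE simp: power_mult)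

lemma primitive_roots_disjoint: "m \<noteq> n \<Longrightarrow> primitive_roots m \<inter> primitive_roots n = {}"
  unfolding primitive_roots_def by (auto intro: dvd_antisym)

lemma finite_primitive_roots: "n > 0 \<Longrightarrow> finite (primitive_roots n)"
  by (rule finite_subset[OF _ finite_nth_roots[of n 1]]) (auto simp: primitive_roots_def)

lemma root_of_unity_in_primitive_roots:
  fixes z :: complex
  assumes "n > 0" "z ^ n = 1"
  obtains d where "d dvd n" "z \<in> primitive_roots d"
proof -
  define d where "d = (LEAST d. d > 0 \<and> z ^ d = 1)"
  have d: "d > 0" "z ^ d = 1"
    using LeastI[of "\<lambda>d. d > 0 \<and> z ^ d = 1" n] assms unfolding d_def by auto
  have least: "d \<le> e" if "e > 0" "z ^ e = 1" for e
    unfolding d_def using that by (intro Least_le) simp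
  have "d dvd e" if "z ^ e = 1" for e
  proof -
    have "z ^ e = (z ^ d) ^ (e div d) * z ^ (e mod d)"
      by (simp flip: power_mult power_add)
    then have "z ^ (e mod d) = 1"
      using that d by simp
    then have "e mod d = 0"
      using least[of "e mod d"] mod_less_divisor[OF d(1), of e] by linarith
    then show ?thesis by (simp add: mod_eq_0_iff_dvd)
  qed
  then show ?thesis using that d assms by (auto simp: primitive_roots_def)
qed

lemma power_in_primitive_roots:
  assumes "z \<in> primitive_roots m" "m > 0"
  shows "z ^ k \<in> primitive_roots (m div gcd m k)"
  using assms dvd_mult_iff_div_gcd_dvd[of m k] by (simp add: primitive_roots_iff power_mult[symmetric])

lemma cis_in_primitive_roots:
  fixes k n :: nat
  assumes "n > 0"
  shows "cis (2 * pi * k / n) \<in> primitive_roots (n div gcd n k)"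
proof -
  have pow: "cis (2 * pi / n) ^ d = cis (2 * pi * d / n)" for d
    unfolding Complex.DeMoivre by (rule arg_cong[where f = cis]) (simp add: field_simps)
  have "cis (2 * pi * d / n) = exp (2 * of_real pi * \<i> * of_nat d / of_nat n)" for d
    by (simp add: cis_conv_exp field_simps)
  then have "cis (2 * pi / n) ^ d = 1 \<longleftrightarrow> n dvd d" for d
    unfolding pow using complex_root_unity_eq_1[of n d] assms by simp
  then have "cis (2 * pi / n) \<in> primitive_roots n"
    by (simp add: primitive_roots_iff)
  then have "cis (2 * pi / n) ^ k \<in> primitive_roots (n div gcd n k)"
    using assms by (rule power_in_primitive_roots)
  then show ?thesis by (simp only: pow)
qed

lemma cis_in_primitive_roots_iff:
  fixes k n :: nat
  assumes "n > 0"
  shows "cis (2 * pi * k / n) \<in> primitive_roots n \<longleftrightarrow> coprime k n"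
proof -
  have "cis (2 * pi * k / n) \<in> primitive_roots n \<longleftrightarrow> n div gcd n k = n"
    using cis_in_primitive_roots[OF assms, of k] primitive_roots_disjoint by fastforce
  also have "\<dots> \<longleftrightarrow> coprime k n"
    using assms by (simp add: div_eq_dividend_iff coprime_iff_gcd_eq_1 gcd.commute[of n k])
  finally show ?thesis .
qed

lemma bij_betw_cis_primitive_roots:
  fixes n :: nat
  assumes n: "n > 0"
  shows "bij_betw (\<lambda>k. cis (2 * pi * k / n)) {k\<in>{1..n}. coprime k n} (primitive_roots n)"
  unfolding bij_betw_def
proof
  have small: "k < n" if "k \<in> {1..n}" "coprime k n" "n \<noteq> 1" for k
    using that by (cases "k = n") auto
  show "inj_on (\<lambda>k. cis (2 * pi * k / n)) {k\<in>{1..n}. coprime k n}"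
  proof (cases "n = 1")
    case False
    then show ?thesis
      using Complex.bij_betw_roots_unity[OF n] small by (auto simp: bij_betw_def inj_on_def)
  qed auto
  show "(\<lambda>k. cis (2 * pi * k / n)) ` {k\<in>{1..n}. coprime k n} = primitive_roots n"
  proof (intro equalityI subsetI)
    fix z assume "z \<in> primitive_roots n"
    moreover from this have "z ^ n = 1" by (simp add: primitive_roots_def)
    then obtain j where j: "j < n" "z = cis (2 * pi * j / n)"
      using Complex.bij_betw_roots_unity[OF n] unfolding bij_betw_def by auto
    ultimately have "coprime j n" using cis_in_primitive_roots_iff[OF n] by simp
    show "z \<in> (\<lambda>k. cis (2 * pi * k / n)) ` {k\<in>{1..n}. coprime k n}"
    proof (cases "j = 0")
      case True
      then have "n = 1" using \<open>coprime j n\<close> by simp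
      then show ?thesis using j True by (auto intro!: image_eqI[of _ _ 1])
    next
      case False
      then show ?thesis using j \<open>coprime j n\<close> by auto
    qed
  qed (use cis_in_primitive_roots_iff[OF n] in auto)
qed

abbreviation \<Phi> :: "nat \<Rightarrow> complex poly" where "\<Phi> \<equiv> cyclotomic_poly"

lemma cyclotomic_poly_primitive_roots: "n > 0 \<Longrightarrow> \<Phi> n = (\<Prod>z\<in>primitive_roots n. [:-z, 1:])"
  unfolding cyclotomic_poly_def
  using prod.reindex_bij_betw[OF bij_betw_cis_primitive_roots, of n "\<lambda>z. [:-z, 1:]"] by simp

lemma prod_linear_dvd:
  fixes g :: "complex poly"
  assumes "finite A" "\<And>a. a \<in> A \<Longrightarrow> poly g a = 0"
  shows "(\<Prod>a\<in>A. [:-a, 1:]) dvd g"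
  using assms
proof (induction A arbitrary: g rule: finite_induct)
  case (insert a A)
  obtain g' where g': "g = [:-a, 1:] * g'"
    using insert.prems by (meson insertI1 poly_eq_0_iff_dvd dvdE)
  have "poly g' b = 0" if "b \<in> A" for b
    using insert.prems[of b] insert.hyps(2) that by (auto simp: g')
  then have "(\<Prod>a\<in>A. [:-a, 1:]) dvd g'" using insert.IH by blast
  then have "[:-a, 1:] * (\<Prod>a\<in>A. [:-a, 1:]) dvd [:-a, 1:] * g'" by (rule mult_dvd_mono[OF dvd_refl])
  moreover have "(\<Prod>x\<in>insert a A. [:-x, 1:]) = [:-a, 1:] * (\<Prod>x\<in>A. [:-x, 1:])"
    using insert.hyps by (rule prod.insert)
  ultimately show ?case using g' by metis
qed simp

lemma monic_eq_prod_linear: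
  fixes f :: "complex poly"
  assumes A: "finite A" and f: "lead_coeff f = 1" "degree f = card A" "\<And>a. a \<in> A \<Longrightarrow> poly f a = 0"
  shows "f = (\<Prod>a\<in>A. [:-a, 1:])"
proof -
  let ?P = "\<Prod>a\<in>A. [:-a, 1::complex:]"
  have "?P dvd f" using A f(3) by (rule prod_linear_dvd)
  then obtain h where h: "f = ?P * h" by (elim dvdE)
  have P: "?P \<noteq> 0" "degree ?P = card A"
    using A by (simp_all add: prod_zero_iff degree_prod_eq_sum_degree)
  have "lead_coeff ?P = 1" by (simp add: lead_coeff_prod)
  have "h \<noteq> 0" using f h by auto
  then have "degree h = 0" using h f P degree_mult_eq[of ?P h] by simp
  then obtain c where "h = [:c:]" by (elim degree_eq_zeroE)
  moreover have "lead_coeff h = 1" using f h \<open>lead_coeff ?P = 1\<close> by (simp add: lead_coeff_mult)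
  ultimately show ?thesis using h by simp
qed

lemma monom_minus_const_eq_prod:
  fixes c :: complex
  assumes "n > 0" "c \<noteq> 0"
  shows "monom 1 n - [:c:] = (\<Prod>w\<in>{w. w ^ n = c}. [:-w, 1:])"
proof (rule monic_eq_prod_linear)
  have eq: "monom 1 n - [:c:] = monom 1 n + [:-c:]" by simp
  have deg: "degree (monom 1 n + [:-c:]) = n"
    using assms by (simp add: degree_add_eq_left degree_monom_eq)
  then show "degree (monom 1 n - [:c:]) = card {w. w ^ n = c}"
    unfolding eq using card_nth_roots[OF assms(2,1)] by simp
  have "coeff [:-c:] n = 0" using assms by (cases n) auto
  then show "lead_coeff (monom 1 n - [:c:]) = 1"
    unfolding eq deg by simp
qed (use assms in \<open>auto simp: poly_monom\<close>)

lemma cyclotomic_poly_monic: "n > 0 \<Longrightarrow> lead_coeff (\<Phi> n) = 1"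
  by (simp add: cyclotomic_poly_primitive_roots lead_coeff_prod)

lemma cyclotomic_poly_nonzero: "n > 0 \<Longrightarrow> \<Phi> n \<noteq> 0"
  using cyclotomic_poly_monic[of n] by (intro notI) simp

lemma poly_cyclotomic_poly_eq_0_iff: "n > 0 \<Longrightarrow> poly (\<Phi> n) z = 0 \<longleftrightarrow> z \<in> primitive_roots n"
  by (simp add: cyclotomic_poly_primitive_roots poly_prod prod_zero_iff finite_primitive_roots)

lemma coprime_cyclotomic_poly:
  assumes "m > 0" "n > 0" "m \<noteq> n"
  shows "coprime (\<Phi> m) (\<Phi> n)"
proof (rule coprimeI)
  fix c assume c: "c dvd \<Phi> m" "c dvd \<Phi> n"
  have no_root: "poly c z \<noteq> 0" for z
  proof
    assume "poly c z = 0"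
    then have "poly (\<Phi> m) z = 0" "poly (\<Phi> n) z = 0"
      using c by (auto elim!: dvdE)
    then have "z \<in> primitive_roots m \<inter> primitive_roots n"
      using assms by (simp add: poly_cyclotomic_poly_eq_0_iff)
    then show False using primitive_roots_disjoint[OF assms(3)] by blast
  qed
  have "degree c = 0"
    using fundamental_theorem_of_algebra[of c] no_root unfolding constant_degree by blast
  moreover have "c \<noteq> 0" using c assms cyclotomic_poly_nonzero by auto
  ultimately show "is_unit c" using is_unit_iff_degree by blast
qed

lemma prod_cyclotomic_poly_power_dvd:
  assumes "finite I" "0 \<notin> I" "\<And>s. s \<in> I \<Longrightarrow> \<Phi> s ^ c s dvd g"
  shows "(\<Prod>s\<in>I. \<Phi> s ^ c s) dvd g"
  using assms
proof (induction I rule: finite_induct)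
  case (insert s I)
  have "coprime (\<Phi> s) (\<Phi> t)" if "t \<in> I" for t
    using that insert.hyps insert.prems(1) by (intro coprime_cyclotomic_poly) (auto intro: gr0I)
  then have "coprime (\<Phi> s ^ c s) (\<Phi> t ^ c t)" if "t \<in> I" for t
    using that by simp
  then have "coprime (\<Phi> s ^ c s) (\<Prod>s\<in>I. \<Phi> s ^ c s)"
    by (rule prod_coprime_right)
  then show ?case using insert by (simp add: divides_mult)
qed simp

lemma monom_minus_one_eq_prod_cyclotomic:
  assumes n: "n > 0"
  shows "monom 1 n - 1 = (\<Prod>d | d dvd n. \<Phi> d)"
proof -
  have roots: "{z. z ^ n = 1} = (\<Union>d\<in>{d. d dvd n}. primitive_roots d)"
  proof (intro equalityI subsetI)
    fix z :: complex assume "z \<in> {z. z ^ n = 1}"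
    then obtain d where "d dvd n" "z \<in> primitive_roots d"
      using root_of_unity_in_primitive_roots[OF n] by blast
    then show "z \<in> (\<Union>d\<in>{d. d dvd n}. primitive_roots d)" by blast
  qed (auto simp: primitive_roots_def elim!: dvdE simp: power_mult)
  have pos: "d > 0" if "d dvd n" for d using that n by (intro gr0I) simp
  have "monom 1 n - 1 = (\<Prod>z\<in>(\<Union>d\<in>{d. d dvd n}. primitive_roots d). [:-z, 1:])"
    using monom_minus_const_eq_prod[OF n, of 1] by (simp add: roots pCons_one)
  also have "\<dots> = (\<Prod>d | d dvd n. \<Prod>z\<in>primitive_roots d. [:-z, 1:])"
    using n pos finite_primitive_roots primitive_roots_disjoint
    by (intro prod.UNION_disjoint_family) (auto simp: disjoint_family_on_def)
  also have "\<dots> = (\<Prod>d | d dvd n. \<Phi> d)"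
    using pos by (intro prod.cong) (simp_all add: cyclotomic_poly_primitive_roots)
  finally show ?thesis .
qed

lemma coeffs_in_Ints_cyclotomic_poly: "n > 0 \<Longrightarrow> coeffs_in \<int> (\<Phi> n)"
proof (induction n rule: less_induct)
  case (less n)
  define D where "D = {d. d dvd n} - {n}"
  have D: "0 < d \<and> d < n" if "d \<in> D" for d
    using that less.prems unfolding D_def by (auto intro: gr0I dest: dvd_imp_le)
  define G where "G = (\<Prod>d\<in>D. \<Phi> d)"
  have "monom 1 n - 1 = \<Phi> n * G"
    unfolding G_def D_def monom_minus_one_eq_prod_cyclotomic[OF less.prems]
    using less.prems by (simp add: prod.remove)
  moreover have G: "lead_coeff G = 1" "coeffs_in \<int> G"
    unfolding G_def lead_coeff_prod using D less.IH
    by (auto intro!: prod.neutral cyclotomic_poly_monic Ints.coeffs_in_prod)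
  moreover have "coeffs_in \<int> (monom 1 n - 1 :: complex poly)"
    by (intro Ints.coeffs_in_diff Ints.coeffs_in_monom) simp_all
  ultimately show ?case
    using Ints.coeffs_in_div_mod[OF G] by (metis nonzero_mult_div_cancel_right leading_coeff_0_iff zero_neq_one)
qed

lemma gcd_prime_nat: "prime (p :: nat) \<Longrightarrow> gcd m p = (if p dvd m then p else 1)"
  using prime_imp_coprime[of p m] by (auto simp: coprime_iff_gcd_eq_1 gcd.commute[of m p])

lemma pth_roots_of_primitive_roots:
  assumes p: "prime p" and n: "n > 0"
  shows "{w. w ^ p \<in> primitive_roots n}
           = primitive_roots (n * p) \<union> (if p dvd n then {} else primitive_roots n)"
proof -
  have p0: "p > 0" and np: "n * p > 0" using p n by (simp_all add: prime_gt_0_nat)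
  have "w ^ p \<in> primitive_roots n \<longleftrightarrow>
          w \<in> primitive_roots (n * p) \<or> (\<not> p dvd n \<and> w \<in> primitive_roots n)" for w
  proof
    assume wp: "w ^ p \<in> primitive_roots n"
    then have "(w ^ p) ^ n = 1" by (simp add: primitive_roots_def)
    then have "w ^ (n * p) = 1" by (simp only: mult.commute[of n p] power_mult)
    then obtain m where m: "m dvd n * p" "w \<in> primitive_roots m"
      by (rule root_of_unity_in_primitive_roots[OF np])
    have "m > 0" using m np by (auto intro: gr0I)
    then have "w ^ p \<in> primitive_roots (m div gcd m p)" using m(2) by (intro power_in_primitive_roots)
    then have "m div gcd m p = n" using wp primitive_roots_disjoint by blast
    then have "m = n * p \<or> (\<not> p dvd n \<and> m = n)"
      using p0 by (auto simp: gcd_prime_nat[OF p] split: if_splits elim!: dvdE)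
    then show "w \<in> primitive_roots (n * p) \<or> (\<not> p dvd n \<and> w \<in> primitive_roots n)"
      using m(2) by auto
  next
    assume "w \<in> primitive_roots (n * p) \<or> (\<not> p dvd n \<and> w \<in> primitive_roots n)"
    then show "w ^ p \<in> primitive_roots n"
    proof
      assume "w \<in> primitive_roots (n * p)"
      then have "w ^ p \<in> primitive_roots (n * p div gcd (n * p) p)"
        using np by (rule power_in_primitive_roots)
      then show ?thesis using p0 by simp
    next
      assume "\<not> p dvd n \<and> w \<in> primitive_roots n"
      then show ?thesis
        using power_in_primitive_roots[of w n p] n by (simp add: gcd_prime_nat[OF p])
    qed
  qed
  then show ?thesis by auto
qed

lemma cyclotomic_poly_pcompose_prime:
  assumes p: "prime p" and n: "n > 0"
  shows "\<Phi> n \<circ>\<^sub>p monom 1 p = (if p dvd n then \<Phi> (n * p) else \<Phi> n * \<Phi> (n * p))"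
proof -
  have p0: "p > 0" and np: "n * p > 0" using p n by (simp_all add: prime_gt_0_nat)
  have linear_pcompose: "[:-z, 1:] \<circ>\<^sub>p monom 1 p = monom 1 p - [:z:]" for z :: complex
  proof -
    have "[:-z, 1:] \<circ>\<^sub>p monom 1 p = monom 1 p + [:-z:]" by (simp add: pcompose_pCons algebra_simps)
    then show ?thesis by simp
  qed
  have nonzero: "z \<noteq> 0" if "z \<in> primitive_roots n" for z
    using that n by (auto simp: primitive_roots_def power_0_left)
  have "\<Phi> n \<circ>\<^sub>p monom 1 p = (\<Prod>z\<in>primitive_roots n. [:-z, 1:] \<circ>\<^sub>p monom 1 p)"
    unfolding cyclotomic_poly_primitive_roots[OF n] by (rule pcompose_prod)
  also have "\<dots> = (\<Prod>z\<in>primitive_roots n. \<Prod>w\<in>{w. w ^ p = z}. [:-w, 1:])"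
    using monom_minus_const_eq_prod[OF p0] nonzero
    by (intro prod.cong) (simp_all add: linear_pcompose)
  also have "\<dots> = (\<Prod>w\<in>(\<Union>z\<in>primitive_roots n. {w. w ^ p = z}). [:-w, 1:])"
    using finite_primitive_roots[OF n] finite_nth_roots[OF p0]
    by (intro prod.UNION_disjoint_family[symmetric]) (auto simp: disjoint_family_on_def)
  also have "(\<Union>z\<in>primitive_roots n. {w. w ^ p = z}) = {w. w ^ p \<in> primitive_roots n}"
    by blast
  also have "(\<Prod>w\<in>{w. w ^ p \<in> primitive_roots n}. [:-w, 1:])
               = (if p dvd n then \<Phi> (n * p) else \<Phi> n * \<Phi> (n * p))"
  proof (cases "p dvd n")
    case False
    have "primitive_roots (n * p) \<inter> primitive_roots n = {}"
      using primitive_roots_disjoint[of "n * p" n] n prime_gt_1_nat[OF p] by simp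
    then show ?thesis
      using False finite_primitive_roots[OF n] finite_primitive_roots[OF np]
      by (simp add: pth_roots_of_primitive_roots[OF p n] prod.union_disjoint
          cyclotomic_poly_primitive_roots[OF n] cyclotomic_poly_primitive_roots[OF np])
  qed (simp add: pth_roots_of_primitive_roots[OF p n] cyclotomic_poly_primitive_roots[OF np])
  finally show ?thesis .
qed

section \<open>Congruences modulo a prime in \<open>\<int>[q]\<close>\<close>

lemma binomial_prime_power:
  fixes x y :: "'a::comm_semiring_1"
  assumes p: "prime p"
  shows "(x + y) ^ p = x ^ p + y ^ p +
           of_nat p * (\<Sum>k\<in>{1..<p}. of_nat ((p choose k) div p) * x ^ k * y ^ (p - k))"
proof -
  have p0: "p > 0" using p by (simp add: prime_gt_0_nat)
  have "{..p} = insert 0 (insert p {1..<p})" using p0 by auto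
  then have "(x + y) ^ p = y ^ p + x ^ p + (\<Sum>k\<in>{1..<p}. of_nat (p choose k) * x ^ k * y ^ (p - k))"
    using p0 by (simp add: binomial_ring add_ac)
  also have "(\<Sum>k\<in>{1..<p}. of_nat (p choose k) * x ^ k * y ^ (p - k))
      = of_nat p * (\<Sum>k\<in>{1..<p}. of_nat ((p choose k) div p) * x ^ k * y ^ (p - k))"
    unfolding sum_distrib_left
  proof (rule sum.cong)
    fix k assume "k \<in> {1..<p}"
    then have "p dvd p choose k" using dvd_choose_prime[of k p] p by auto
    then have "(of_nat (p choose k) :: 'a) = of_nat p * of_nat ((p choose k) div p)"
      by (metis dvd_mult_div_cancel of_nat_mult)
    then show "of_nat (p choose k) * x ^ k * y ^ (p - k) =
               of_nat p * (of_nat ((p choose k) div p) * x ^ k * y ^ (p - k))"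
      by (simp add: mult.assoc)
  qed simp
  finally show ?thesis by (simp add: add_ac)
qed

lemma prime_dvd_power_minus_self:
  fixes a :: int
  assumes p: "prime p"
  shows "int p dvd a ^ p - a"
proof -
  have step: "int p dvd (b + 1) ^ p - (b + 1) \<longleftrightarrow> int p dvd b ^ p - b" for b :: int
  proof -
    obtain s where "(b + 1) ^ p = b ^ p + 1 + int p * s"
      using binomial_prime_power[OF p, of b 1] by auto
    then have "(b + 1) ^ p - (b + 1) = (b ^ p - b) + int p * s" by (simp add: algebra_simps)
    then show ?thesis by (simp only: dvd_add_left_iff[OF dvd_triv_left])
  qed
  show ?thesis
  proof (induction a rule: int_induct[where k = 0])
    case base
    then show ?case using p by (simp add: prime_gt_0_nat power_0_left)
  next
    case (step1 i)
    then show ?case using step by blast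
  next
    case (step2 i)
    then show ?case using step[of "i - 1"] by simp
  qed
qed

definition int_poly_cong :: "nat \<Rightarrow> complex poly \<Rightarrow> complex poly \<Rightarrow> bool" where
  "int_poly_cong p f g \<longleftrightarrow> (\<exists>h. coeffs_in \<int> h \<and> f - g = smult (of_nat p) h)"

lemma int_poly_cong_refl: "int_poly_cong p f f"
  unfolding int_poly_cong_def by (intro exI[of _ 0]) simp

lemma int_poly_cong_sym: "int_poly_cong p f g \<Longrightarrow> int_poly_cong p g f"
  unfolding int_poly_cong_def
proof (elim exE conjE)
  fix h assume "coeffs_in \<int> h" "f - g = smult (of_nat p) h"
  moreover have "g - f = - (f - g)" by simp
  ultimately have "coeffs_in \<int> (- h)" "g - f = smult (of_nat p) (- h)"
    by (simp_all add: Ints.coeffs_in_uminus)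
  then show "\<exists>h. coeffs_in \<int> h \<and> g - f = smult (of_nat p) h" by blast
qed

lemma int_poly_cong_trans:
  "int_poly_cong p f g \<Longrightarrow> int_poly_cong p g h \<Longrightarrow> int_poly_cong p f h"
  unfolding int_poly_cong_def
proof (elim exE conjE)
  fix u v assume u: "coeffs_in \<int> u" "f - g = smult (of_nat p) u"
    and v: "coeffs_in \<int> v" "g - h = smult (of_nat p) v"
  have "f - h = (f - g) + (g - h)" by simp
  also have "\<dots> = smult (of_nat p) (u + v)" by (simp add: u v smult_add_right)
  finally show "\<exists>w. coeffs_in \<int> w \<and> f - h = smult (of_nat p) w"
    using u v by (blast intro: Ints.coeffs_in_add)
qed

lemma int_poly_cong_add:
  "int_poly_cong p f g \<Longrightarrow> int_poly_cong p f' g' \<Longrightarrow> int_poly_cong p (f + f') (g + g')"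
  unfolding int_poly_cong_def
proof (elim exE conjE)
  fix u v assume u: "coeffs_in \<int> u" "f - g = smult (of_nat p) u"
    and v: "coeffs_in \<int> v" "f' - g' = smult (of_nat p) v"
  have "f + f' - (g + g') = (f - g) + (f' - g')" by simp
  also have "\<dots> = smult (of_nat p) (u + v)" by (simp add: u v smult_add_right)
  finally show "\<exists>w. coeffs_in \<int> w \<and> f + f' - (g + g') = smult (of_nat p) w"
    using u v by (blast intro: Ints.coeffs_in_add)
qed

lemma int_poly_cong_mult:
  assumes "int_poly_cong p f g" "int_poly_cong p f' g'" "coeffs_in \<int> f" "coeffs_in \<int> g'"
  shows "int_poly_cong p (f * f') (g * g')"
proof -
  obtain h h' where h: "coeffs_in \<int> h" "f - g = smult (of_nat p) h"
    and h': "coeffs_in \<int> h'" "f' - g' = smult (of_nat p) h'"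
    using assms(1,2) unfolding int_poly_cong_def by blast
  have "f * f' - g * g' = f * (f' - g') + (f - g) * g'" by (simp add: algebra_simps)
  also have "\<dots> = smult (of_nat p) (f * h' + h * g')" by (simp add: h h' smult_add_right)
  finally show ?thesis
    unfolding int_poly_cong_def using assms h h' by (blast intro: Ints.coeffs_in_add Ints.coeffs_in_mult)
qed

lemma int_poly_cong_power:
  assumes "int_poly_cong p f g" "coeffs_in \<int> f" "coeffs_in \<int> g"
  shows "int_poly_cong p (f ^ n) (g ^ n)"
proof (induction n)
  case (Suc n)
  show ?case
    using int_poly_cong_mult[OF assms(1) Suc.IH assms(2) Ints.coeffs_in_power[OF assms(3)]] by simp
qed (simp add: int_poly_cong_refl)

lemma int_poly_cong_add_power_prime:
  assumes p: "prime p" and "coeffs_in \<int> f" "coeffs_in \<int> g"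
  shows "int_poly_cong p ((f + g) ^ p) (f ^ p + g ^ p)"
proof -
  define s where "s = (\<Sum>k\<in>{1..<p}. of_nat ((p choose k) div p) * f ^ k * g ^ (p - k))"
  have "coeffs_in \<int> s"
    unfolding s_def using assms
    by (intro Ints.coeffs_in_sum Ints.coeffs_in_mult Ints.coeffs_in_power Ints.coeffs_in_of_nat)
  moreover have "(f + g) ^ p - (f ^ p + g ^ p) = smult (of_nat p) s"
    using binomial_prime_power[OF p, of f g] by (simp add: s_def of_nat_poly)
  ultimately show ?thesis unfolding int_poly_cong_def by blast
qed

lemma int_poly_cong_const_power_prime:
  assumes p: "prime p" and "a \<in> \<int>"
  shows "int_poly_cong p ([:a:] ^ p) [:a:]"
proof -
  obtain b where b: "a = of_int b" using assms(2) by (elim Ints_cases)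
  obtain m where "b ^ p - b = int p * m" using prime_dvd_power_minus_self[OF p, of b] by (elim dvdE)
  then have "of_int (b ^ p - b) = (of_int (int p * m) :: complex)" by (simp only:)
  then have "a ^ p - a = of_nat p * of_int m" unfolding b by simp
  then have "[:a:] ^ p - [:a:] = smult (of_nat p) [:of_int m:]" by (simp add: poly_const_pow)
  moreover have "coeffs_in \<int> [:of_int m:]" by (simp add: Ints.coeffs_in_const)
  ultimately show ?thesis unfolding int_poly_cong_def by blast
qed

lemma int_poly_cong_pcompose_monom_prime:
  assumes p: "prime p" and f: "coeffs_in \<int> f"
  shows "int_poly_cong p (f \<circ>\<^sub>p monom 1 p) (f ^ p)"
  using f
proof (induction f)
  case 0
  then show ?case using p by (simp add: int_poly_cong_refl prime_gt_0_nat power_0_left)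
next
  case (pCons a f)
  have a: "a \<in> \<int>" and f: "coeffs_in \<int> f" using pCons.prems by (simp_all add: Ints.coeffs_in_pCons_iff)
  have X: "coeffs_in \<int> [:0, 1:]" by (simp add: Ints.coeffs_in_pCons_iff)
  have "pCons a f = [:a:] + [:0, 1:] * f" by simp
  then have binomial: "int_poly_cong p ((pCons a f) ^ p) ([:a:] ^ p + ([:0, 1:] * f) ^ p)"
    using a f X by (simp only:) (intro int_poly_cong_add_power_prime[OF p] Ints.coeffs_in_const Ints.coeffs_in_mult)
  have termwise: "int_poly_cong p ([:a:] ^ p + ([:0, 1:] * f) ^ p) ([:a:] + monom 1 p * (f \<circ>\<^sub>p monom 1 p))"
  proof (rule int_poly_cong_add)
    show "int_poly_cong p ([:a:] ^ p) [:a:]" by (rule int_poly_cong_const_power_prime[OF p a])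
    have "int_poly_cong p (f ^ p) (f \<circ>\<^sub>p monom 1 p)"
      using pCons.IH f by (blast intro: int_poly_cong_sym)
    then have cong: "int_poly_cong p (monom 1 p * f ^ p) (monom 1 p * (f \<circ>\<^sub>p monom 1 p))"
      using f by (intro int_poly_cong_mult int_poly_cong_refl Ints.coeffs_in_monom
          Ints.coeffs_in_pcompose Ints.coeffs_in_power) simp_all
    have "[:0, 1:] ^ p = (monom 1 p :: complex poly)" by (simp add: monom_altdef)
    then show "int_poly_cong p (([:0, 1:] * f) ^ p) (monom 1 p * (f \<circ>\<^sub>p monom 1 p))"
      unfolding power_mult_distrib by (simp only: cong)
  qed
  have "pCons a f \<circ>\<^sub>p monom 1 p = [:a:] + monom 1 p * (f \<circ>\<^sub>p monom 1 p)"
    by (simp add: pcompose_pCons)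
  then have "int_poly_cong p ((pCons a f) ^ p) (pCons a f \<circ>\<^sub>p monom 1 p)"
    using int_poly_cong_trans[OF binomial termwise] by simp
  then show ?case by (rule int_poly_cong_sym)
qed

lemma int_poly_cong_cancel_monic:
  assumes f: "lead_coeff f = 1" "coeffs_in \<int> f" and cong: "int_poly_cong p (f * g) (f * g')"
  shows "int_poly_cong p g g'"
proof -
  obtain h where h: "coeffs_in \<int> h" "f * (g - g') = smult (of_nat p) h"
    using cong unfolding int_poly_cong_def by (auto simp: right_diff_distrib)
  have "f \<noteq> 0" using f by auto
  then have "g - g' = (f * (g - g')) div f" by simp
  also have "\<dots> = smult (of_nat p) (h div f)" by (simp add: h(2) div_smult_left)
  finally have "g - g' = smult (of_nat p) (h div f)" .
  then show ?thesis
    unfolding int_poly_cong_def using Ints.coeffs_in_div_mod[OF f h(1)] by blast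
qed

lemma cyclotomic_poly_mult_prime_cong:
  assumes p: "prime p" and n: "n > 0"
  shows "int_poly_cong p (\<Phi> (n * p)) (\<Phi> n ^ (if p dvd n then p else p - 1))"
proof -
  have Zn: "coeffs_in \<int> (\<Phi> n)" using coeffs_in_Ints_cyclotomic_poly[OF n] .
  have frob: "int_poly_cong p (\<Phi> n \<circ>\<^sub>p monom 1 p) (\<Phi> n ^ p)"
    using int_poly_cong_pcompose_monom_prime[OF p Zn] .
  show ?thesis
  proof (cases "p dvd n")
    case True
    then show ?thesis using frob cyclotomic_poly_pcompose_prime[OF p n] by simp
  next
    case False
    have "\<Phi> n ^ p = \<Phi> n * \<Phi> n ^ (p - 1)" using prime_gt_1_nat[OF p] by (simp add: power_eq_if)
    then have "int_poly_cong p (\<Phi> n * \<Phi> (n * p)) (\<Phi> n * \<Phi> n ^ (p - 1))"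
      using frob False cyclotomic_poly_pcompose_prime[OF p n] by simp
    then have "int_poly_cong p (\<Phi> (n * p)) (\<Phi> n ^ (p - 1))"
      by (rule int_poly_cong_cancel_monic[OF cyclotomic_poly_monic[OF n] Zn])
    then show ?thesis using False by simp
  qed
qed

lemma cyclotomic_poly_cong_prime_power:
  assumes p: "prime p" and n: "n > 0" and k: "k \<ge> 1"
  obtains e where "k \<le> e" "p - 1 \<le> e" "int_poly_cong p (\<Phi> (n * p ^ k)) (\<Phi> n ^ e)"
  using k
proof (induction k arbitrary: thesis rule: dec_induct)
  case base
  define e where "e = (if p dvd n then p else p - 1)"
  have "1 \<le> e" "p - 1 \<le> e" using prime_gt_1_nat[OF p] unfolding e_def by auto
  moreover have "int_poly_cong p (\<Phi> (n * p ^ 1)) (\<Phi> n ^ e)"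
    using cyclotomic_poly_mult_prime_cong[OF p n] unfolding e_def by simp
  ultimately show ?case by (rule base.prems)
next
  case (step k)
  obtain e where e: "k \<le> e" "p - 1 \<le> e" "int_poly_cong p (\<Phi> (n * p ^ k)) (\<Phi> n ^ e)"
    using step.IH by blast
  have p1: "p > 1" using prime_gt_1_nat[OF p] .
  have nk: "n * p ^ k > 0" using n p1 by simp
  have "p dvd n * p ^ k" using step.hyps by (cases k) auto
  then have "int_poly_cong p (\<Phi> (n * p ^ Suc k)) (\<Phi> (n * p ^ k) ^ p)"
    using cyclotomic_poly_mult_prime_cong[OF p nk] by (simp add: ac_simps)
  moreover have "int_poly_cong p (\<Phi> (n * p ^ k) ^ p) ((\<Phi> n ^ e) ^ p)"
    using e(3) coeffs_in_Ints_cyclotomic_poly[OF nk] coeffs_in_Ints_cyclotomic_poly[OF n]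
    by (intro int_poly_cong_power Ints.coeffs_in_power)
  ultimately have "int_poly_cong p (\<Phi> (n * p ^ Suc k)) (\<Phi> n ^ (e * p))"
    unfolding power_mult by (rule int_poly_cong_trans)
  moreover have "e * 2 \<le> e * p" using p1 by simp
  then have "Suc k \<le> e * p" "p - 1 \<le> e * p" using e step.hyps by linarith+
  ultimately show ?case using step.prems by blast
qed

lemma prod_int_poly_cong_mult:
  assumes "finite K" "coeffs_in \<int> B"
    and "\<And>k. k \<in> K \<Longrightarrow> coeffs_in \<int> (C k) \<and> int_poly_cong p (A k) (B * C k)"
  shows "\<exists>u v. coeffs_in \<int> u \<and> coeffs_in \<int> v \<and>
           (\<Prod>k\<in>K. A k) = B * u + smult (of_nat p ^ card K) v"
  using assms
proof (induction K rule: finite_induct)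
  case empty
  show ?case by (intro exI[of _ 0] exI[of _ 1]) simp
next
  case (insert k K)
  obtain u v where uv: "coeffs_in \<int> u" "coeffs_in \<int> v" "(\<Prod>k\<in>K. A k) = B * u + smult (of_nat p ^ card K) v"
    using insert by blast
  obtain h where h: "coeffs_in \<int> h" "A k - B * C k = smult (of_nat p) h"
    using insert.prems(2)[of k] unfolding int_poly_cong_def by blast
  have C: "coeffs_in \<int> (C k)" using insert.prems(2)[of k] by simp
  have "(\<Prod>k\<in>insert k K. A k) = (B * C k + smult (of_nat p) h) * (B * u + smult (of_nat p ^ card K) v)"
    using insert.hyps uv(3) h(2) by (simp add: algebra_simps)
  also have "\<dots> = B * (C k * (B * u + smult (of_nat p ^ card K) v) + smult (of_nat p) (h * u))
                 + smult (of_nat p ^ card (insert k K)) (h * v)"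
    using insert.hyps by (simp add: algebra_simps smult_add_right)
  finally show ?case
    using uv h C insert.prems(1)
    by (intro exI conjI) (auto intro!: Ints.coeffs_in_add Ints.coeffs_in_mult Ints.coeffs_in_smult)
qed

lemma cyclotomic_poly_power_cong_mult:
  assumes p: "prime p" and n: "n > 0" "n' > 0" and rel: "n = n' * p ^ k \<or> n' = n * p ^ k"
  obtains M C where "coeffs_in \<int> C" "int_poly_cong p (\<Phi> n ^ M) (\<Phi> n' ^ N * C)"
proof (cases "k = 0")
  case True
  then show ?thesis using rel that[of 1 N] by (auto simp: int_poly_cong_refl)
next
  case False
  have Z: "coeffs_in \<int> (\<Phi> n)" "coeffs_in \<int> (\<Phi> n')" using n by (simp_all add: coeffs_in_Ints_cyclotomic_poly)
  from rel show ?thesis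
  proof
    assume "n = n' * p ^ k"
    then obtain e where e: "k \<le> e" "int_poly_cong p (\<Phi> n) (\<Phi> n' ^ e)"
      using cyclotomic_poly_cong_prime_power[OF p n(2), of k] False by auto
    have "e * N = N + (e - 1) * N" using e(1) False by (cases e) auto
    then have "(\<Phi> n' ^ e) ^ N = \<Phi> n' ^ N * \<Phi> n' ^ ((e - 1) * N)"
      by (simp only: power_mult[symmetric] power_add)
    moreover have "int_poly_cong p (\<Phi> n ^ N) ((\<Phi> n' ^ e) ^ N)"
      using int_poly_cong_power[OF e(2)] Z by (simp add: Ints.coeffs_in_power)
    ultimately have "int_poly_cong p (\<Phi> n ^ N) (\<Phi> n' ^ N * \<Phi> n' ^ ((e - 1) * N))"
      by simp
    then show ?thesis using Z by (intro that) (simp_all add: Ints.coeffs_in_power)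
  next
    assume "n' = n * p ^ k"
    then obtain e where e: "int_poly_cong p (\<Phi> n') (\<Phi> n ^ e)"
      using cyclotomic_poly_cong_prime_power[OF p n(1), of k] False by auto
    then have "int_poly_cong p (\<Phi> n ^ (e * N)) (\<Phi> n' ^ N * 1)"
      using int_poly_cong_power[OF int_poly_cong_sym[OF e]] Z
      by (simp add: Ints.coeffs_in_power power_mult)
    then show ?thesis by (intro that[of 1 "e * N"]) simp_all
  qed
qed

section \<open>\<open>p\<close>-adic separation\<close>

context subring_of_complex
begin

lemma p_adically_separatedD:
  "p_adically_separated R p \<Longrightarrow> (\<And>j. \<exists>r\<in>R. x = of_nat p ^ j * r) \<Longrightarrow> x = 0"
  unfolding p_adically_separated_def by blast

lemma p_adically_separatedI:
  "(\<And>x. (\<And>j. \<exists>r\<in>R. x = of_nat p ^ j * r) \<Longrightarrow> x = 0) \<Longrightarrow> p_adically_separated R p"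
  unfolding p_adically_separated_def by force

lemma coeff_mod_eq_mult:
  assumes B: "lead_coeff B = 1" "coeffs_in R B" and w: "coeffs_in R w" and dvd: "B dvd g - smult c w"
  shows "\<exists>r\<in>R. coeff (g mod B) i = c * r"
proof -
  have "g mod B = smult c w mod B" using dvd by (simp add: mod_eq_dvd_iff)
  then have "coeff (g mod B) i = c * coeff (w mod B) i" by (simp add: mod_smult_left)
  moreover have "coeff (w mod B) i \<in> R"
    using coeffs_in_div_mod[OF B w] unfolding coeffs_in_def by blast
  ultimately show ?thesis by blast
qed

lemma dvd_if_dvd_diff_smult_prime_powers:
  assumes sep: "p_adically_separated R p" and B: "lead_coeff B = 1" "coeffs_in R B"
    and cong: "\<And>j. \<exists>w. coeffs_in R w \<and> B dvd g - smult (of_nat p ^ j) w"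
  shows "B dvd g"
proof -
  have "coeff (g mod B) i = 0" for i
    using p_adically_separatedD[OF sep] coeff_mod_eq_mult[OF B] cong by meson
  then show ?thesis by (simp add: poly_eq_iff dvd_eq_mod_eq_0)
qed

lemma algebraic_divides_nonzero_int:
  assumes c: "c \<in> R" "c \<noteq> 0" "algebraic c"
  obtains a :: int and t where "a \<noteq> 0" "t \<in> R" "of_int a = c * t"
proof -
  obtain f where f: "coeffs_in \<int> f" "f \<noteq> 0" "poly f c = 0"
    using c(3) unfolding algebraic_def coeffs_in_def by blast
  have "\<exists>a::int. a \<noteq> 0 \<and> (\<exists>t\<in>R. of_int a = c * t)"
    using f
  proof (induction f rule: pCons_induct)
    case (pCons a f)
    have a: "a \<in> \<int>" and f: "coeffs_in \<int> f"
      using pCons.prems(1) by (simp_all add: Ints.coeffs_in_pCons_iff)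
    have eq: "a = c * (- poly f c)" using pCons.prems(3) by (simp add: algebra_simps eq_neg_iff_add_eq_0)
    show ?case
    proof (cases "a = 0")
      case False
      obtain b where b: "a = of_int b" using a by (elim Ints_cases)
      have "- poly f c \<in> R" using poly_mem[OF coeffs_in_of_Ints[OF f] c(1)] by (rule uminus_mem)
      then show ?thesis using False eq b by (intro exI[of _ b] conjI bexI[of _ "- poly f c"]) auto
    next
      case True
      then have "f \<noteq> 0" "poly f c = 0" using pCons.hyps eq c(2) by auto
      then show ?thesis using pCons.IH f by blast
    qed
  qed simp
  then show ?thesis using that by blast
qed

lemma algebraic_eq_0_if_multiple_of_infinitely_many_primes:
  assumes c: "c \<in> R" "algebraic c" and P: "infinite P"
    and P_sep: "\<And>p. p \<in> P \<Longrightarrow> prime p \<and> p_adically_separated R p"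
    and mult: "\<And>p. p \<in> P \<Longrightarrow> \<exists>r\<in>R. c = of_nat p * r"
  shows "c = 0"
proof (rule ccontr)
  assume "c \<noteq> 0"
  then obtain a :: int and t where a: "a \<noteq> 0" "t \<in> R" "of_int a = c * t"
    using algebraic_divides_nonzero_int c by blast
  obtain p where p: "p > nat \<bar>a\<bar>" "p \<in> P" using P unfolding infinite_nat_iff_unbounded by blast
  have prime: "prime p" and sep: "p_adically_separated R p" using P_sep[OF p(2)] by auto
  obtain r where r: "r \<in> R" "c = of_nat p * r" using mult[OF p(2)] by blast
  have "\<not> int p dvd a" using p(1) a(1) dvd_imp_le_int[of a "int p"] by auto
  then have "coprime (int p) a" using prime by (simp add: prime_imp_coprime prime_nat_iff_prime)
  then obtain u v where uv: "u * int p + v * a = 1" using bezout_int[of "int p" a] by auto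
  define s where "s = of_int u + of_int v * r * t"
  have s: "s \<in> R" unfolding s_def using r(1) a(2) Ints_subset by (intro add_mem mult_mem) auto
  have "(1::complex) = of_int (u * int p + v * a)" using uv by simp
  also have "\<dots> = of_nat p * s" unfolding s_def using a(3) r(2) by (simp add: algebra_simps)
  finally have one: "1 = of_nat p * s" .
  have "1 = of_nat p ^ j * s ^ j" for j
    using one by (metis power_mult_distrib power_one)
  then have "(1::complex) = 0"
    using p_adically_separatedD[OF sep] power_mem[OF s] by blast
  then show False by simp
qed

lemma dvd_if_dvd_diff_smult_primes:
  assumes alg: "\<forall>x\<in>R. algebraic x" and P: "infinite P"
    and P_sep: "\<And>p. p \<in> P \<Longrightarrow> prime p \<and> p_adically_separated R p"
    and B: "lead_coeff B = 1" "coeffs_in R B"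
    and cong: "\<And>p. p \<in> P \<Longrightarrow> \<exists>w. coeffs_in R w \<and> B dvd g - smult (of_nat p) w"
  shows "B dvd g"
proof -
  have "coeff (g mod B) i = 0" for i
  proof (rule algebraic_eq_0_if_multiple_of_infinitely_many_primes[OF _ _ P P_sep])
    show "\<exists>r\<in>R. coeff (g mod B) i = of_nat p * r" if "p \<in> P" for p
      using cong[OF that] coeff_mod_eq_mult[OF B] by blast
    then show "coeff (g mod B) i \<in> R"
      using P by (metis finite.emptyI mult_mem of_nat_mem ex_in_conv)
    then show "algebraic (coeff (g mod B) i)" using alg by blast
  qed
  then show ?thesis by (simp add: poly_eq_iff dvd_eq_mod_eq_0)
qed

lemma p_adically_separated_if_algebraic_int:
  assumes int: "\<forall>x\<in>R. algebraic_int x" and p: "prime p"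
  shows "p_adically_separated R p"
proof (rule p_adically_separatedI)
  fix c assume c: "\<And>j. \<exists>r\<in>R. c = of_nat p ^ j * r"
  show "c = 0"
  proof (rule ccontr)
    assume "c \<noteq> 0"
    have "c \<in> R" using c[of 0] by auto
    moreover from this have "algebraic c" using int by (blast intro: algebraic_int_imp_algebraic)
    ultimately obtain a :: int and t where a: "a \<noteq> 0" "t \<in> R" "of_int a = c * t"
      using \<open>c \<noteq> 0\<close> algebraic_divides_nonzero_int by metis
    have "int p ^ j dvd a" for j
    proof -
      obtain r where r: "r \<in> R" "c = of_nat p ^ j * r" using c by blast
      have p0: "(of_nat p :: complex) ^ j \<noteq> 0" using p by (simp add: prime_gt_0_nat)
      have "of_int a = (of_nat p :: complex) ^ j * (r * t)" using a(3) r(2) by (simp add: algebra_simps)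
      then have "of_int a / of_nat p ^ j = r * t" using p0 by simp
      moreover have "algebraic_int (r * t)" using int mult_mem[OF r(1) a(2)] by blast
      ultimately have "algebraic_int (of_int a / (of_nat p :: complex) ^ j)" by simp
      then have "of_int a / (of_nat p :: complex) ^ j \<in> \<int>"
        by (rule rational_algebraic_int_is_int) simp
      then obtain m where "of_int a / (of_nat p :: complex) ^ j = of_int m" by (elim Ints_cases)
      then have "(of_int a :: complex) = of_int (int p ^ j * m)" using p0 by (simp add: field_simps)
      then have "a = int p ^ j * m" by (simp only: of_int_eq_iff)
      then show ?thesis by simp
    qed
    then have "\<bar>int p ^ nat \<bar>a\<bar>\<bar> \<le> \<bar>a\<bar>" by (rule dvd_imp_le_int[OF a(1)])
    then have "int p ^ nat \<bar>a\<bar> \<le> \<bar>a\<bar>" by simp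
    moreover have "int (nat \<bar>a\<bar>) < int (2 ^ nat \<bar>a\<bar>)"
      using less_exp[of "nat \<bar>a\<bar>"] by (simp only: of_nat_less_iff)
    then have "\<bar>a\<bar> < 2 ^ nat \<bar>a\<bar>" by simp
    moreover have "(2::int) ^ nat \<bar>a\<bar> \<le> int p ^ nat \<bar>a\<bar>"
      using prime_ge_2_nat[OF p] by (intro power_mono) auto
    ultimately show False by simp
  qed
qed

end

section \<open>The completion \<open>R[q]\<^sup>S\<close>\<close>

lemma one_in_Phi_star: "1 \<in> Phi_star S"
  unfolding Phi_star_def by (intro CollectI exI[of _ "{#}"]) simp

lemma mult_in_Phi_star: "f \<in> Phi_star S \<Longrightarrow> g \<in> Phi_star S \<Longrightarrow> f * g \<in> Phi_star S"
  unfolding Phi_star_def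
proof safe
  fix M N assume "set_mset M \<subseteq> S" "set_mset N \<subseteq> S"
  then show "\<exists>K. prod_mset (image_mset \<Phi> M) * prod_mset (image_mset \<Phi> N) = prod_mset (image_mset \<Phi> K)
               \<and> set_mset K \<subseteq> S"
    by (intro exI[of _ "M + N"]) auto
qed

lemma cyclotomic_poly_in_Phi_star: "s \<in> S \<Longrightarrow> \<Phi> s \<in> Phi_star S"
  unfolding Phi_star_def by (intro CollectI exI[of _ "{#s#}"]) simp

lemma cyclotomic_poly_power_in_Phi_star: "s \<in> S \<Longrightarrow> \<Phi> s ^ N \<in> Phi_star S"
  by (induction N) (simp_all add: one_in_Phi_star mult_in_Phi_star cyclotomic_poly_in_Phi_star)

lemma prod_cyclotomic_poly_in_Phi_star: "finite M \<Longrightarrow> M \<subseteq> S \<Longrightarrow> (\<Prod>m\<in>M. \<Phi> m) \<in> Phi_star S"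
  by (induction M rule: finite_induct) (simp_all add: one_in_Phi_star mult_in_Phi_star cyclotomic_poly_in_Phi_star)

lemma Phi_star_monic_int:
  assumes "f \<in> Phi_star S" "0 \<notin> S"
  shows "lead_coeff f = 1" "coeffs_in \<int> f"
proof -
  obtain M where M: "f = prod_mset (image_mset \<Phi> M)" "set_mset M \<subseteq> S"
    using assms(1) unfolding Phi_star_def by blast
  have "0 \<notin># M" using M(2) assms(2) by blast
  then have "lead_coeff (prod_mset (image_mset \<Phi> M)) = 1 \<and> coeffs_in \<int> (prod_mset (image_mset \<Phi> M))"
    by (induction M) (simp_all add: lead_coeff_mult cyclotomic_poly_monic coeffs_in_Ints_cyclotomic_poly Ints.coeffs_in_mult)
  then show "lead_coeff f = 1" "coeffs_in \<int> f" using M(1) by simp_all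
qed

lemma (in subring_of_complex) completion_elem_diff:
  assumes "completion_elem R S x" "completion_elem R S y"
  shows "completion_elem R S (\<lambda>f. x f - y f)"
  unfolding completion_elem_def
proof (intro conjI ballI impI)
  fix f assume "f \<in> Phi_star S"
  then show "coeffs_in R (x f - y f)"
    using assms unfolding completion_elem_def by (blast intro: coeffs_in_diff)
next
  fix f f' assume f: "f \<in> Phi_star S" "f' \<in> Phi_star S" "dvd_in \<int> f f'"
  have "dvd_in R f (x f' - x f)" "dvd_in R f (y f' - y f)"
    using assms f unfolding completion_elem_def by blast+
  then obtain h h' where "coeffs_in R h" "x f' - x f = f * h" "coeffs_in R h'" "y f' - y f = f * h'"
    unfolding dvd_in_def by blast
  then have "coeffs_in R (h - h')" "x f' - y f' - (x f - y f) = f * (h - h')"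
    by (simp_all add: coeffs_in_diff algebra_simps)
  then show "dvd_in R f (x f' - y f' - (x f - y f))" unfolding dvd_in_def by blast
qed

locale completion_element = subring_of_complex R for R +
  fixes S :: "nat set" and z :: "complex poly \<Rightarrow> complex poly"
  assumes zero_notin_S: "0 \<notin> S" and completion_elem: "completion_elem R S z"
begin

lemma gt_0_if_in_S: "s \<in> S \<Longrightarrow> s > 0"
  using zero_notin_S by (auto intro: gr0I)

lemma coeffs_in_z: "f \<in> Phi_star S \<Longrightarrow> coeffs_in R (z f)"
  using completion_elem unfolding completion_elem_def by blast

lemma dvd_z_mult_diff:
  assumes "f \<in> Phi_star S" "f * G \<in> Phi_star S" "coeffs_in \<int> G"
  shows "f dvd z (f * G) - z f"
proof -
  have "dvd_in \<int> f (f * G)" unfolding dvd_in_def using assms(3) by blast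
  then have "dvd_in R f (z (f * G) - z f)"
    using completion_elem assms(1,2) unfolding completion_elem_def by blast
  then show ?thesis unfolding dvd_in_def by (auto intro: dvdI)
qed

lemma dvd_z_mult:
  assumes "f \<in> Phi_star S" "f * G \<in> Phi_star S" "coeffs_in \<int> G" "f dvd z f"
  shows "f dvd z (f * G)"
  using dvd_add[OF dvd_z_mult_diff[OF assms(1-3)] assms(4)] by simp

lemma dvd_z_diff_smult:
  assumes B: "B \<in> Phi_star S" and F: "F \<in> Phi_star S" and dvd: "F dvd z (B * F)"
    and uv: "coeffs_in \<int> u" "coeffs_in \<int> v" "F = B * u + smult c v"
  shows "\<exists>w. coeffs_in R w \<and> B dvd z B - smult c w"
proof -
  have BF: "B * F \<in> Phi_star S" using B F by (rule mult_in_Phi_star)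
  obtain g where g: "z (B * F) = F * g" using dvd by (elim dvdE)
  have F_monic: "lead_coeff F = 1" "coeffs_in R F"
    using Phi_star_monic_int[OF F zero_notin_S] coeffs_in_of_Ints by auto
  then have "F \<noteq> 0" by auto
  then have "g = z (B * F) div F" using g by simp
  then have g_R: "coeffs_in R g" using coeffs_in_div_mod[OF F_monic coeffs_in_z[OF BF]] by simp
  have "B dvd z (B * F) - z B"
    using dvd_z_mult_diff[OF B BF] Phi_star_monic_int[OF F zero_notin_S] by simp
  then have "B dvd B * (u * g) - (z (B * F) - z B)" by (rule dvd_diff[OF dvd_triv_left])
  moreover have "z B - smult c (v * g) = B * (u * g) - (z (B * F) - z B)"
    using g uv(3) by (simp add: algebra_simps)
  ultimately have "B dvd z B - smult c (v * g)" by (simp only:)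
  then show ?thesis using coeffs_in_mult[OF coeffs_in_of_Ints[OF uv(2)] g_R] by blast
qed

text \<open>The image of \<open>z\<close> in the \<open>\<Phi>\<^sub>s\<close>-adic completion \<open>lim R[q]/(\<Phi>\<^sub>s\<^sup>N)\<close> is zero.\<close>

definition vanishes_at :: "nat \<Rightarrow> bool" where
  "vanishes_at s \<longleftrightarrow> (\<forall>N. \<Phi> s ^ N dvd z (\<Phi> s ^ N))"

lemma dvd_z_if_vanishes_at_all:
  assumes all: "\<And>s. s \<in> S \<Longrightarrow> vanishes_at s" and f: "f \<in> Phi_star S"
  shows "f dvd z f"
proof -
  obtain M where M: "f = prod_mset (image_mset \<Phi> M)" "set_mset M \<subseteq> S"
    using f unfolding Phi_star_def by blast
  have f_eq: "f = (\<Prod>s\<in>set_mset M. \<Phi> s ^ count M s)"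
    using M(1) by (simp add: image_prod_mset_multiplicity)
  have "\<Phi> s ^ count M s dvd z f" if s: "s \<in> set_mset M" for s
  proof -
    define G where "G = (\<Prod>s'\<in>set_mset M - {s}. \<Phi> s' ^ count M s')"
    have fG: "f = \<Phi> s ^ count M s * G" unfolding f_eq G_def using s by (simp add: prod.remove)
    have "s \<in> S" using s M(2) by blast
    have "coeffs_in \<int> G"
      unfolding G_def using M(2) gt_0_if_in_S
      by (intro Ints.coeffs_in_prod Ints.coeffs_in_power coeffs_in_Ints_cyclotomic_poly) auto
    moreover have "\<Phi> s ^ count M s \<in> Phi_star S"
      using \<open>s \<in> S\<close> by (rule cyclotomic_poly_power_in_Phi_star)
    moreover have "\<Phi> s ^ count M s dvd z (\<Phi> s ^ count M s)"
      using all[OF \<open>s \<in> S\<close>] unfolding vanishes_at_def by blast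
    ultimately show ?thesis using dvd_z_mult[of "\<Phi> s ^ count M s" G] f fG by simp
  qed
  then have "(\<Prod>s\<in>set_mset M. \<Phi> s ^ count M s) dvd z f"
    using M(2) zero_notin_S by (intro prod_cyclotomic_poly_power_dvd) auto
  then show ?thesis using f_eq by simp
qed

lemma vanishes_at_transfer:
  assumes n: "n \<in> S" "n' \<in> S" and van: "vanishes_at n" and p: "prime p"
    and sep: "p_adically_separated R p" and rel: "n = n' * p ^ k \<or> n' = n * p ^ k"
  shows "vanishes_at n'"
  unfolding vanishes_at_def
proof
  fix N
  define B where "B = \<Phi> n' ^ N"
  have B: "B \<in> Phi_star S" unfolding B_def using n(2) by (rule cyclotomic_poly_power_in_Phi_star)
  have B_monic: "lead_coeff B = 1" "coeffs_in \<int> B" using Phi_star_monic_int[OF B zero_notin_S] by auto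
  obtain M C where C: "coeffs_in \<int> C" "int_poly_cong p (\<Phi> n ^ M) (B * C)"
    using cyclotomic_poly_power_cong_mult[OF p gt_0_if_in_S[OF n(1)] gt_0_if_in_S[OF n(2)] rel]
    unfolding B_def by blast
  have "\<exists>w. coeffs_in R w \<and> B dvd z B - smult (of_nat p ^ j) w" for j
  proof -
    define F where "F = (\<Phi> n ^ M) ^ j"
    obtain u v where uv: "coeffs_in \<int> u" "coeffs_in \<int> v" "F = B * u + smult (of_nat p ^ j) v"
      using prod_int_poly_cong_mult[of "{..<j}" B "\<lambda>_. C" p "\<lambda>_. \<Phi> n ^ M"] C B_monic(2)
      unfolding F_def by auto
    have F: "F \<in> Phi_star S"
      unfolding F_def using cyclotomic_poly_power_in_Phi_star[OF n(1)] by (simp flip: power_mult)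
    have "F dvd z F" using van unfolding vanishes_at_def F_def by (simp flip: power_mult)
    then have "F dvd z (F * B)"
      using dvd_z_mult[OF F _ B_monic(2)] mult_in_Phi_star[OF F B] by simp
    then show ?thesis using dvd_z_diff_smult[OF B F _ uv] by (simp add: mult.commute)
  qed
  then have "B dvd z B"
    using dvd_if_dvd_diff_smult_prime_powers[OF sep B_monic(1) coeffs_in_of_Ints[OF B_monic(2)]] by blast
  then show "\<Phi> n' ^ N dvd z (\<Phi> n' ^ N)" unfolding B_def .
qed

lemma vanishes_at_connected:
  assumes conn: "equiv_R_connected R S" and n: "n \<in> S" "vanishes_at n" and s: "s \<in> S"
  shows "vanishes_at s"
proof -
  have "(\<lambda>u v. u \<in> S \<and> v \<in> S \<and> equiv_R R u v)\<^sup>*\<^sup>* n s"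
    using conn n s unfolding equiv_R_connected_def by blast
  then show ?thesis
  proof (induction rule: rtranclp_induct)
    case (step u w)
    then have uw: "u \<in> S" "w \<in> S" "equiv_R R u w" by auto
    have "R \<noteq> {0}" using one_mem by force
    then consider "u = w" | p k where "prime p" "p_adically_separated R p" "u = w * p ^ k \<or> w = u * p ^ k"
      using uw(3) unfolding equiv_R_def by blast
    then show ?case
    proof cases
      case 1
      then show ?thesis using step.IH by simp
    next
      case 2
      then show ?thesis using vanishes_at_transfer[OF uw(1,2) step.IH] by blast
    qed
  qed (use n in simp)
qed

lemma z_cong_mod_prime_power:
  assumes n: "n \<in> S" and M: "finite M" "M \<subseteq> S" "\<And>m. m \<in> M \<Longrightarrow> \<Phi> m dvd z (\<Phi> m)"
    and cong: "\<And>m. m \<in> M \<Longrightarrow> \<exists>C. coeffs_in \<int> C \<and> int_poly_cong p (\<Phi> m) (\<Phi> n ^ N * C)"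
  shows "\<exists>w. coeffs_in R w \<and> \<Phi> n ^ N dvd z (\<Phi> n ^ N) - smult (of_nat p ^ card M) w"
proof -
  define B where "B = \<Phi> n ^ N"
  define F where "F = (\<Prod>m\<in>M. \<Phi> m)"
  have B: "B \<in> Phi_star S" unfolding B_def using n by (rule cyclotomic_poly_power_in_Phi_star)
  have B_int: "coeffs_in \<int> B" using Phi_star_monic_int[OF B zero_notin_S] by simp
  have F: "F \<in> Phi_star S" unfolding F_def using M(1,2) by (rule prod_cyclotomic_poly_in_Phi_star)
  have BF: "B * F \<in> Phi_star S" using B F by (rule mult_in_Phi_star)
  have "\<Phi> m dvd z (B * F)" if m: "m \<in> M" for m
  proof -
    define G where "G = B * (\<Prod>m'\<in>M - {m}. \<Phi> m')"
    have "B * F = \<Phi> m * G" unfolding F_def G_def using M(1) m by (simp add: prod.remove ac_simps)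
    moreover have "coeffs_in \<int> G"
      unfolding G_def using B_int M(2) gt_0_if_in_S
      by (intro Ints.coeffs_in_mult Ints.coeffs_in_prod coeffs_in_Ints_cyclotomic_poly) auto
    moreover have "\<Phi> m \<in> Phi_star S" using m M(2) by (auto intro: cyclotomic_poly_in_Phi_star)
    ultimately show ?thesis using dvd_z_mult[of "\<Phi> m" G] BF M(3)[OF m] by simp
  qed
  then have "(\<Prod>m\<in>M. \<Phi> m ^ 1) dvd z (B * F)"
    using M(1,2) zero_notin_S by (intro prod_cyclotomic_poly_power_dvd) auto
  then have "F dvd z (B * F)" unfolding F_def by simp
  moreover obtain C where "\<And>m. m \<in> M \<Longrightarrow> coeffs_in \<int> (C m) \<and> int_poly_cong p (\<Phi> m) (B * C m)"
    using cong unfolding B_def by metis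
  then obtain u v where "coeffs_in \<int> u" "coeffs_in \<int> v" "F = B * u + smult (of_nat p ^ card M) v"
    using prod_int_poly_cong_mult[OF M(1) B_int] unfolding F_def by blast
  ultimately show ?thesis using dvd_z_diff_smult[OF B F] unfolding B_def by blast
qed

end

context completion_element
begin

lemma vanishes_at_if_infinitely_many_prime_powers:
  assumes n: "n \<in> S" and p: "prime p" and sep: "p_adically_separated R p"
    and inf: "infinite {m \<in> S. \<Phi> m dvd z (\<Phi> m) \<and> (\<exists>k\<ge>1. m = n * p ^ k)}"
  shows "vanishes_at n"
  unfolding vanishes_at_def
proof
  fix N
  define X where "X = {m \<in> S. \<Phi> m dvd z (\<Phi> m) \<and> (\<exists>k\<ge>1. m = n * p ^ k)} - (\<lambda>k. n * p ^ k) ` {..N}"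
  have "infinite X" unfolding X_def using inf by (intro Diff_infinite_finite) auto
  have cong: "\<exists>C. coeffs_in \<int> C \<and> int_poly_cong p (\<Phi> m) (\<Phi> n ^ N * C)" if mX: "m \<in> X" for m
  proof -
    obtain k where k: "k \<ge> 1" "m = n * p ^ k" using mX unfolding X_def by blast
    have "k > N" using mX k(2) unfolding X_def by (auto simp: not_less)
    obtain e where e: "k \<le> e" "int_poly_cong p (\<Phi> m) (\<Phi> n ^ e)"
      using cyclotomic_poly_cong_prime_power[OF p gt_0_if_in_S[OF n] k(1)] k(2) by blast
    have "\<Phi> n ^ e = \<Phi> n ^ N * \<Phi> n ^ (e - N)" using e(1) \<open>k > N\<close> by (simp flip: power_add)
    then show ?thesis
      using e(2) coeffs_in_Ints_cyclotomic_poly[OF gt_0_if_in_S[OF n]]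
      by (intro exI[of _ "\<Phi> n ^ (e - N)"]) (simp add: Ints.coeffs_in_power)
  qed
  have "\<exists>w. coeffs_in R w \<and> \<Phi> n ^ N dvd z (\<Phi> n ^ N) - smult (of_nat p ^ j) w" for j
  proof -
    obtain M where M: "M \<subseteq> X" "finite M" "card M = j"
      using infinite_arbitrarily_large[OF \<open>infinite X\<close>] by blast
    have "M \<subseteq> S" "\<And>m. m \<in> M \<Longrightarrow> \<Phi> m dvd z (\<Phi> m)" using M(1) unfolding X_def by auto
    then show ?thesis using z_cong_mod_prime_power[OF n M(2)] cong M(1,3) by blast
  qed
  moreover have "lead_coeff (\<Phi> n ^ N) = 1" "coeffs_in R (\<Phi> n ^ N)"
    using cyclotomic_poly_monic coeffs_in_Ints_cyclotomic_poly gt_0_if_in_S[OF n]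
    by (simp_all add: lead_coeff_power coeffs_in_of_Ints coeffs_in_power)
  ultimately show "\<Phi> n ^ N dvd z (\<Phi> n ^ N)"
    by (intro dvd_if_dvd_diff_smult_prime_powers[OF sep]) auto
qed

lemma vanishes_at_if_infinitely_many_primes:
  assumes alg: "\<forall>x\<in>R. algebraic x" and n: "n \<in> S"
    and inf: "infinite {p. prime p \<and> p_adically_separated R p \<and>
                (\<exists>k\<ge>1. n * p ^ k \<in> S \<and> \<Phi> (n * p ^ k) dvd z (\<Phi> (n * p ^ k)))}"
  shows "vanishes_at n"
  unfolding vanishes_at_def
proof
  fix N
  define P where "P = {p. prime p \<and> p_adically_separated R p \<and>
                (\<exists>k\<ge>1. n * p ^ k \<in> S \<and> \<Phi> (n * p ^ k) dvd z (\<Phi> (n * p ^ k)))} - {..N}"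
  have "infinite P" unfolding P_def using inf by (intro Diff_infinite_finite) auto
  have "\<exists>w. coeffs_in R w \<and> \<Phi> n ^ N dvd z (\<Phi> n ^ N) - smult (of_nat p) w" if pP: "p \<in> P" for p
  proof -
    obtain k where p: "prime p" "p > N" and k: "k \<ge> 1" "n * p ^ k \<in> S"
      and dvd: "\<Phi> (n * p ^ k) dvd z (\<Phi> (n * p ^ k))"
      using pP unfolding P_def by (auto simp: not_le)
    obtain e where e: "p - 1 \<le> e" "int_poly_cong p (\<Phi> (n * p ^ k)) (\<Phi> n ^ e)"
      using cyclotomic_poly_cong_prime_power[OF p(1) gt_0_if_in_S[OF n] k(1)] by blast
    have "\<Phi> n ^ e = \<Phi> n ^ N * \<Phi> n ^ (e - N)" using e(1) p(2) by (simp flip: power_add)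
    then have "\<exists>C. coeffs_in \<int> C \<and> int_poly_cong p (\<Phi> (n * p ^ k)) (\<Phi> n ^ N * C)"
      using e(2) coeffs_in_Ints_cyclotomic_poly[OF gt_0_if_in_S[OF n]]
      by (intro exI[of _ "\<Phi> n ^ (e - N)"]) (simp add: Ints.coeffs_in_power)
    then show ?thesis
      using z_cong_mod_prime_power[OF n, of "{n * p ^ k}" p N] k(2) dvd by simp
  qed
  moreover have "\<And>p. p \<in> P \<Longrightarrow> prime p \<and> p_adically_separated R p" unfolding P_def by blast
  moreover have "lead_coeff (\<Phi> n ^ N) = 1" "coeffs_in R (\<Phi> n ^ N)"
    using cyclotomic_poly_monic coeffs_in_Ints_cyclotomic_poly gt_0_if_in_S[OF n]
    by (simp_all add: lead_coeff_power coeffs_in_of_Ints coeffs_in_power)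
  ultimately show "\<Phi> n ^ N dvd z (\<Phi> n ^ N)"
    using dvd_if_dvd_diff_smult_primes[OF alg \<open>infinite P\<close>] by blast
qed

lemma vanishes_at_if_infinitely_many_equivalent:
  assumes alg: "\<forall>x\<in>R. algebraic x" and n: "n \<in> S"
    and T: "T \<subseteq> S" "\<And>m. m \<in> T \<Longrightarrow> \<Phi> m dvd z (\<Phi> m)"
    and inf: "infinite {m \<in> T. equiv_R R m n}"
  shows "vanishes_at n"
proof -
  define P where "P = {p. prime p \<and> p_adically_separated R p \<and>
                (\<exists>k\<ge>1. n * p ^ k \<in> S \<and> \<Phi> (n * p ^ k) dvd z (\<Phi> (n * p ^ k)))}"
  define Q where "Q p = {m \<in> S. \<Phi> m dvd z (\<Phi> m) \<and> (\<exists>k\<ge>1. m = n * p ^ k)}" for p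
  have "{m \<in> T. equiv_R R m n} - {m. m dvd n} \<subseteq> (\<Union>p\<in>P. Q p)"
  proof
    fix m assume m: "m \<in> {m \<in> T. equiv_R R m n} - {m. m dvd n}"
    then have "m \<noteq> n" by auto
    moreover have "R \<noteq> {0}" using one_mem by force
    ultimately obtain p k where pk: "prime p" "p_adically_separated R p" "m = n * p ^ k \<or> n = m * p ^ k"
      using m unfolding equiv_R_def by blast
    then have mk: "m = n * p ^ k" using m by auto
    then have "k \<ge> 1" using \<open>m \<noteq> n\<close> by (cases k) auto
    then show "m \<in> (\<Union>p\<in>P. Q p)" using m mk pk T unfolding P_def Q_def by auto
  qed
  moreover have "infinite ({m \<in> T. equiv_R R m n} - {m. m dvd n})"
    using inf gt_0_if_in_S[OF n] by (intro Diff_infinite_finite) simp_all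
  ultimately have "infinite (\<Union>p\<in>P. Q p)" using finite_subset by blast
  then consider "infinite P" | p where "p \<in> P" "infinite (Q p)" by blast
  then show ?thesis
  proof cases
    case 1
    then show ?thesis using vanishes_at_if_infinitely_many_primes[OF alg n] unfolding P_def by blast
  next
    case 2
    then show ?thesis
      using vanishes_at_if_infinitely_many_prime_powers[OF n] unfolding P_def Q_def by blast
  qed
qed

end

section \<open>Injectivity of \<open>\<tau>\<close>\<close>

theorem tau_injective_if_equiv_R_connected:
  assumes R: "subring_C R" and alg: "\<forall>x\<in>R. algebraic x" and S: "0 \<notin> S" "equiv_R_connected R S"
    and T: "T \<subseteq> S" and n: "n \<in> S" "infinite {m \<in> T. equiv_R R m n}"
  shows "tau_injective R S T"
  unfolding tau_injective_def
proof (intro allI impI)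
  fix x y assume x: "completion_elem R S x" and y: "completion_elem R S y" and tau: "tau_eq R T x y"
  interpret subring_of_complex R using R by unfold_locales
  interpret completion_element R S "\<lambda>f. x f - y f"
    using S(1) completion_elem_diff[OF x y] by unfold_locales
  have "\<Phi> m dvd x (\<Phi> m) - y (\<Phi> m)" if "m \<in> T" for m
    using tau that unfolding tau_eq_def dvd_in_def by (auto intro: dvdI)
  then have "vanishes_at n" using vanishes_at_if_infinitely_many_equivalent[OF alg n(1) T] n(2) by blast
  then have "vanishes_at s" if "s \<in> S" for s using vanishes_at_connected[OF S(2) n(1)] that by blast
  then have "f dvd x f - y f" if "f \<in> Phi_star S" for f using dvd_z_if_vanishes_at_all that by blast
  then show "completion_eq R S x y"
    unfolding completion_eq_def
    using dvd_in_iff_dvd Phi_star_monic_int[OF _ S(1)] coeffs_in_of_Ints coeffs_in_z by blast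
qed

lemma equiv_R_connected_positive:
  assumes sep: "\<And>p. prime p \<Longrightarrow> p_adically_separated R p"
  shows "equiv_R_connected R {n. n \<ge> 1}"
proof -
  define rel where "rel = (\<lambda>u v. u \<in> {n::nat. n \<ge> 1} \<and> v \<in> {n. n \<ge> 1} \<and> equiv_R R u v)"
  have "rel\<^sup>*\<^sup>* 1 a \<and> rel\<^sup>*\<^sup>* a 1" if "a \<ge> 1" for a
    using that
  proof (induction a rule: less_induct)
    case (less a)
    show ?case
    proof (cases "a = 1")
      case False
      obtain p b where p: "prime p" "a = p * b" using prime_factor_nat[OF False] by (auto elim: dvdE)
      have "b \<ge> 1" "b < a" using p less.prems prime_gt_1_nat[OF p(1)] by (auto intro: Suc_leI gr0I)
      then have IH: "rel\<^sup>*\<^sup>* 1 b" "rel\<^sup>*\<^sup>* b 1" using less.IH by blast+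
      have "\<exists>p k. prime p \<and> p_adically_separated R p \<and> (a = b * p ^ k \<or> b = a * p ^ k)"
        using p sep by (intro exI[of _ p] exI[of _ 1]) (simp add: mult.commute)
      then have "equiv_R R a b" "equiv_R R b a" unfolding equiv_R_def by blast+
      then have "rel b a" "rel a b" unfolding rel_def using \<open>b \<ge> 1\<close> less.prems by auto
      then show ?thesis
        using rtranclp.rtrancl_into_rtrancl[OF IH(1)] converse_rtranclp_into_rtranclp[OF _ IH(2)] by blast
    qed simp
  qed
  then show ?thesis
    unfolding equiv_R_connected_def rel_def[symmetric]
    by (auto intro: rtranclp_trans[of rel _ 1])
qed

theorem tau_injective_positive_if_algebraic_int:
  assumes R: "subring_C R" and int: "\<forall>x\<in>R. algebraic_int x" and T: "0 \<notin> T"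
    and inf: "infinite {m\<in>T. \<exists>p k. prime p \<and> k \<ge> 1 \<and> m = p ^ k}"
  shows "tau_injective R {n. n \<ge> 1} T"
proof -
  interpret subring_of_complex R using R by unfold_locales
  have sep: "p_adically_separated R p" if "prime p" for p
    using int that by (rule p_adically_separated_if_algebraic_int)
  have "{m\<in>T. \<exists>p k. prime p \<and> k \<ge> 1 \<and> m = p ^ k} \<subseteq> {m\<in>T. equiv_R R m 1}"
    unfolding equiv_R_def using sep by auto
  then have "infinite {m\<in>T. equiv_R R m 1}" using inf infinite_super by blast
  moreover have "T \<subseteq> {n. n \<ge> 1}" using T by (auto intro: Suc_leI gr0I)
  moreover have "\<forall>x\<in>R. algebraic x" using int by (blast intro: algebraic_int_imp_algebraic)
  ultimately show ?thesis
    using tau_injective_if_equiv_R_connected[OF R _ _ equiv_R_connected_positive[OF sep], of T 1]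
    by simp
qed

theorem theorem6p1:
  shows
   "(\<forall>(R::complex set) (S::nat set) T.
       subring_C R \<and> (\<forall>x\<in>R. algebraic x) \<and> 0 \<notin> S \<and> equiv_R_connected R S \<and> T \<subseteq> S \<and>
       (\<exists>n\<in>S. infinite {m\<in>T. equiv_R R m n})
       \<longrightarrow> tau_injective R S T)
  \<and> (\<forall>(R::complex set) (T::nat set).
       subring_C R \<and> (\<forall>x\<in>R. algebraic_int x) \<and> 0 \<notin> T \<and>
       infinite {m\<in>T. \<exists>p k. prime p \<and> k \<ge> 1 \<and> m = p ^ k}
       \<longrightarrow> tau_injective R {n. n \<ge> 1} T)"
proof (intro conjI allI impI, goal_cases)
  case (1 R S T)
  then show ?case using tau_injective_if_equiv_R_connected by blast
next
  case (2 R T)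
  then show ?case using tau_injective_positive_if_algebraic_int by blast
qed

end
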